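(* Suppose that $p$ is an odd prime. Let $\mu$ denote the number of integers $j$ with $1\le j<\frac{p}{2}$ such that the inverse $j^{-1}$ of $j$ modulo $p$ (taken as the representative in $\{1,\dots,p-1\}$) is also less than $\frac{p}{2}$. (1) If $p\equiv 3\pmod 4$, then $(p-1)!!\equiv (-1)^{\frac{\mu+1}{2}} \pmod p$. (2) If $p\equiv 1\pmod 4$, then $(p-1)!!\equiv (-1)^{\frac{\mu+1}{2}}\, i_p \pmod p$, where $i_p$ is the unique natural number less than $\frac{p}{2}$ with $i_p^2\equiv -1 \pmod p$.
   Context: For a natural number $n$, the double factorial $n!!$ is the product of the natural numbers less than or equal to $n$ that have the same parity as $n$. *)

theory Defs
  imports "HOL-Number_Theory.Number_Theory"
begin

fun dfact :: "nat \<Rightarrow> nat" where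
  "dfact 0 = 1"
| "dfact (Suc 0) = 1"
| "dfact (Suc (Suc n)) = Suc (Suc n) * dfact n"

definition modinv :: "nat \<Rightarrow> nat \<Rightarrow> nat" where
  "modinv p j = (THE k. k \<in> {1..p-1} \<and> [j * k = 1] (mod p))"

definition mu :: "nat \<Rightarrow> nat" where
  "mu p = card {j. 1 \<le> j \<and> 2 * j < p \<and> 2 * modinv p j < p}"

definition ip :: "nat \<Rightarrow> nat" where
  "ip p = (THE i. 2 * i < p \<and> [int i ^ 2 = -1] (mod int p))"

end

theory Submission
  imports Defs
begin

text \<open>Write \<open>p = 2h + 1\<close>. Then \<open>(p - 1)!! = 2\<^sup>h h!\<close>, and Gauss's lemma evaluates \<open>2\<^sup>h\<close> as
  \<open>(-1)\<^bsup>h - \<lfloor>h/2\<rfloor>\<^esup>\<close>. Split \<open>{1..h}\<close> into the \<open>\<mu>\<close> residues whose inverse also lies in \<open>{1..h}\<close>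
  and the rest. The first part is closed under \<open>j \<mapsto> j\<^sup>-\<^sup>1\<close>, whose only fixed point is 1, so its
  product is 1 and \<open>\<mu>\<close> is odd. The second part is closed under \<open>j \<mapsto> -j\<^sup>-\<^sup>1\<close>, which pairs factors
  with product \<open>-1\<close>; its fixed points are the square roots of \<open>-1\<close> below \<open>p/2\<close>, so there is none
  when \<open>p \<equiv> 3 (mod 4)\<close> and exactly \<open>i\<^sub>p\<close> otherwise. Comparing exponents mod 2 gives the result.\<close>

lemma prod_cong_involution_without_fixpoints:
  fixes g :: "'a \<Rightarrow> int"
  assumes "finite T"
    and "\<And>x. x \<in> T \<Longrightarrow> s x \<in> T"
    and "\<And>x. x \<in> T \<Longrightarrow> s (s x) = x"
    and "\<And>x. x \<in> T \<Longrightarrow> s x \<noteq> x"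
    and "\<And>x. x \<in> T \<Longrightarrow> [g x * g (s x) = c] (mod m)"
  shows "even (card T) \<and> [prod g T = c ^ (card T div 2)] (mod m)"
  using assms
proof (induction T rule: finite_psubset_induct)
  case (psubset T)
  show ?case
  proof (cases "T = {}")
    case False
    then obtain x where x: "x \<in> T" by blast
    define T' where "T' = T - {x, s x}"
    have sx: "s x \<in> T" "s x \<noteq> x" using x psubset.prems by auto
    have "s y \<in> T'" if "y \<in> T'" for y
    proof -
      have y: "y \<in> T" "y \<noteq> x" "y \<noteq> s x" using that unfolding T'_def by auto
      then have "s y \<noteq> x" "s y \<noteq> s x" using psubset.prems(2) x by metis+
      then show ?thesis using y psubset.prems(1) unfolding T'_def by blast
    qed
    moreover have "T' \<subset> T" using x unfolding T'_def by auto
    ultimately have IH: "even (card T') \<and> [prod g T' = c ^ (card T' div 2)] (mod m)"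
      using psubset.prems by (intro psubset.IH) auto
    have T: "T = insert x (insert (s x) T')" and new: "x \<notin> insert (s x) T'" "s x \<notin> T'"
      using x sx unfolding T'_def by auto
    have fin: "finite T'" using psubset.hyps unfolding T'_def by simp
    have card: "card T = card T' + 2" using fin new by (simp add: T)
    have "prod g T = g x * g (s x) * prod g T'" using fin new by (simp add: T)
    also have "[\<dots> = c * c ^ (card T' div 2)] (mod m)"
      using IH psubset.prems(4)[OF x] by (simp add: cong_mult)
    finally show ?thesis using IH card by simp
  qed simp
qed

lemma minus_one_power_mult_eq:
  assumes "even (a + b) \<longleftrightarrow> even c"
  shows "(-1 :: 'a :: ring_1) ^ a * (-1) ^ b = (-1) ^ c"
proof -
  have "(-1 :: 'a) ^ a * (-1) ^ b = (-1) ^ (a + b)" by (simp add: power_add)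
  also have "\<dots> = (-1) ^ c" by (simp only: minus_one_power_iff assms)
  finally show ?thesis .
qed

lemma coprime_less_prime:
  fixes p j :: nat
  assumes "prime p" "1 \<le> j" "j < p"
  shows "coprime j p"
  using assms by (metis coprime_commute dvd_imp_le not_le prime_imp_coprime_nat le_less_trans zero_less_one)

lemma modinv_eqI:
  assumes "1 \<le> k" "k < p" "[j * k = 1] (mod p)"
  shows "modinv p j = k"
  unfolding modinv_def
proof (rule the_equality)
  show "k \<in> {1..p - 1} \<and> [j * k = 1] (mod p)" using assms by auto
next
  fix k' assume k': "k' \<in> {1..p - 1} \<and> [j * k' = 1] (mod p)"
  have "coprime j p"
    using assms(3) by (metis coprime_iff_invertible_nat One_nat_def)
  moreover have "[j * k' = j * k] (mod p)" using k' assms(3) by (meson cong_sym cong_trans)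
  ultimately have "[k' = k] (mod p)" using cong_mult_lcancel_nat by blast
  then show "k' = k" using k' assms(2) by (auto intro: cong_less_modulus_unique_nat)
qed

lemma modinv_spec:
  assumes "coprime j p" "1 < p"
  shows "modinv p j \<in> {1..<p}" and "[j * modinv p j = 1] (mod p)"
proof -
  obtain x where x: "[j * x = 1] (mod p)" using cong_solve_coprime_nat assms(1) by auto
  then have k: "[j * (x mod p) = 1] (mod p)" by (simp add: cong_def mod_mult_right_eq)
  moreover have "x mod p \<noteq> 0"
  proof
    assume "x mod p = 0"
    then show False using k assms(2) by (simp add: cong_def)
  qed
  moreover have "x mod p < p" using assms(2) by simp
  ultimately have "modinv p j = x mod p" by (intro modinv_eqI) auto
  then show "modinv p j \<in> {1..<p}" and "[j * modinv p j = 1] (mod p)"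
    using k \<open>x mod p \<noteq> 0\<close> \<open>x mod p < p\<close> by auto
qed

lemma modinv_modinv:
  assumes "coprime j p" "1 \<le> j" "j < p"
  shows "modinv p (modinv p j) = j"
  using modinv_spec[OF assms(1)] assms by (intro modinv_eqI) (auto simp: mult.commute)

lemma prime_square_cong_one:
  fixes p j :: nat
  assumes "prime p" "1 \<le> j" "j < p" "[j * j = 1] (mod p)"
  shows "j = 1 \<or> j = p - 1"
proof -
  have "[int j * int j = 1] (mod int p)" using assms(4) by (metis cong_int_iff of_nat_1 of_nat_mult)
  then have "[int j = 1] (mod int p) \<or> [int j = - 1] (mod int p)"
    using cong_square[of "int p"] assms(1,2) by simp
  then show ?thesis
  proof
    assume "[int j = 1] (mod int p)"
    then have "[j = 1] (mod p)" by (metis cong_int_iff of_nat_1)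
    then show ?thesis using assms(3) prime_gt_1_nat[OF assms(1)] cong_less_modulus_unique_nat by blast
  next
    assume "[int j = - 1] (mod int p)"
    then have "int p dvd int (j + 1)" by (simp add: cong_iff_dvd_diff add.commute)
    then have "p dvd j + 1" by (simp only: of_nat_dvd_iff)
    then have "p \<le> j + 1" by (simp add: dvd_imp_le)
    then show ?thesis using assms(3) by linarith
  qed
qed

lemma cong_square_minus_one_unique:
  fixes p a b :: nat
  assumes "prime p" "2 * a < p" "2 * b < p"
    and "[int a ^ 2 = -1] (mod int p)" "[int b ^ 2 = -1] (mod int p)"
  shows "a = b"
proof -
  have "int p dvd int a ^ 2 - int b ^ 2"
    using cong_trans[OF assms(4) cong_sym[OF assms(5)]] by (simp add: cong_iff_dvd_diff)
  also have "int a ^ 2 - int b ^ 2 = (int a - int b) * (int a + int b)"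
    by (simp add: power2_eq_square algebra_simps)
  finally have "int p dvd int a - int b \<or> int p dvd int a + int b"
    using assms(1) by (simp add: prime_dvd_mult_iff)
  then show ?thesis
  proof
    assume "int p dvd int a - int b"
    then have "[a = b] (mod p)" by (simp add: cong_iff_dvd_diff flip: cong_int_iff)
    then show ?thesis using assms(2,3) cong_less_modulus_unique_nat by auto
  next
    assume dvd: "int p dvd int a + int b"
    have "a \<noteq> 0"
    proof
      assume "a = 0"
      then have "int p dvd 1" using assms(4) by (simp add: cong_iff_dvd_diff)
      then show False using assms(1) by simp
    qed
    then show ?thesis using zdvd_imp_le[OF dvd] assms(2,3) by linarith
  qed
qed

lemma cong_square_minus_one_imp_cong_1_mod_4:
  fixes p h x :: nat
  assumes "prime p" "p = 2 * h + 1" "[int x ^ 2 = -1] (mod int p)"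
  shows "[p = 1] (mod 4)"
proof -
  have "\<not> p dvd x"
  proof
    assume "p dvd x"
    then have "int p dvd int x ^ 2" by (simp add: power2_eq_square)
    then have "int p dvd 1" using cong_dvd_iff[OF assms(3)] by simp
    then show False using assms(1) by simp
  qed
  then have "[x ^ (p - 1) = 1] (mod p)" using fermat_theorem[OF assms(1)] by blast
  then have "[(int x ^ 2) ^ h = 1] (mod int p)"
    using assms(2) by (metis cong_int_iff of_nat_1 of_nat_power power_mult add_diff_cancel_right')
  moreover have "[(int x ^ 2) ^ h = (-1) ^ h] (mod int p)" using assms(3) by (rule cong_pow)
  ultimately have "[(-1) ^ h = (1::int)] (mod int p)" by (metis cong_sym cong_trans)
  moreover have "\<not> int p dvd 2" using prime_gt_1_nat[OF assms(1)] assms(2) by (auto dest: zdvd_imp_le)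
  ultimately have "even h" by (cases "even h") (auto simp: cong_iff_dvd_diff)
  then show ?thesis using assms(2) by (auto simp: cong_def elim: evenE)
qed

lemma dfact_double: "dfact (2 * n) = 2 ^ n * fact n"
  by (induction n) (simp_all add: algebra_simps)

lemma two_power_half_cong:
  assumes "prime p" "p = 2 * h + 1"
  shows "[(2::int) ^ h = (-1) ^ (h - h div 2)] (mod int p)"
proof -
  have p_gt_2: "p > 2" using prime_ge_2_nat[OF assms(1)] assms(2) by auto
  have "\<not> int p dvd 2" using p_gt_2 by (auto dest: zdvd_imp_le)
  then interpret GAUSS p 2 using assms(1) p_gt_2 by unfold_locales (auto simp: cong_0_iff)
  have half: "(int p - 1) div 2 = int h" using assms(2) by simp
  have "C = (\<lambda>x. x * 2 mod int p) ` {0<..int h}"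
    unfolding C_def B_def A_def half by (simp add: image_image)
  also have "\<dots> = (\<lambda>x. x * 2) ` {0<..int h}"
    using assms(2) by (intro image_cong) auto
  finally have "E = (\<lambda>x. x * 2) ` {int (h div 2) + 1..int h}"
    unfolding E_def half by (auto simp: image_iff)
  then have "card E = h - h div 2"
    by (simp add: card_image inj_on_def)
  then show ?thesis using pre_gauss_lemma half by simp
qed

definition half_small_inv :: "nat \<Rightarrow> nat set" where
  "half_small_inv p = {j. 1 \<le> j \<and> 2 * j < p \<and> 2 * modinv p j < p}"

text \<open>As \<open>p\<close> is odd, \<open>2 * modinv p j \<noteq> p\<close>, so this is the complement of \<open>half_small_inv p\<close> in \<open>{1..p div 2}\<close>.\<close>

definition half_large_inv :: "nat \<Rightarrow> nat set" where
  "half_large_inv p = {j. 1 \<le> j \<and> 2 * j < p \<and> p < 2 * modinv p j}"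

lemma finite_half_small_inv [simp]: "finite (half_small_inv p)"
  unfolding half_small_inv_def by (rule finite_subset[of _ "{..<p}"]) auto

lemma finite_half_large_inv [simp]: "finite (half_large_inv p)"
  unfolding half_large_inv_def by (rule finite_subset[of _ "{..<p}"]) auto

lemma mu_eq_card_half_small_inv: "mu p = card (half_small_inv p)"
  unfolding mu_def half_small_inv_def ..

lemma half_inv_partition:
  assumes "p = 2 * h + 1"
  shows "half_small_inv p \<union> half_large_inv p = {1..h}"
    and "half_small_inv p \<inter> half_large_inv p = {}"
  using assms unfolding half_small_inv_def half_large_inv_def by auto presburger

lemma prod_half_small_inv:
  assumes "prime p" "p = 2 * h + 1"
  shows "odd (mu p) \<and> [(\<Prod>j\<in>half_small_inv p. int j) = 1] (mod int p)"
proof -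
  let ?S = "half_small_inv p"
  have p_gt_2: "p > 2" using prime_ge_2_nat[OF assms(1)] assms(2) by auto
  have inv: "modinv p j \<in> {1..<p}" "[j * modinv p j = 1] (mod p)" "modinv p (modinv p j) = j"
    if "j \<in> ?S" for j
    using that coprime_less_prime[OF assms(1)] modinv_spec[of j p] modinv_modinv[of j p] p_gt_2
    unfolding half_small_inv_def by auto
  have "modinv p 1 = 1" using p_gt_2 by (intro modinv_eqI) auto
  then have one: "1 \<in> ?S" using p_gt_2 unfolding half_small_inv_def by simp
  have "even (card (?S - {1})) \<and> [(\<Prod>j\<in>?S - {1}. int j) = 1 ^ (card (?S - {1}) div 2)] (mod int p)"
  proof (rule prod_cong_involution_without_fixpoints)
    fix j assume j: "j \<in> ?S - {1}"
    then show "modinv p j \<in> ?S - {1}" "modinv p (modinv p j) = j"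
      using inv[of j] \<open>modinv p 1 = 1\<close> unfolding half_small_inv_def by (auto simp: algebra_simps)
    show "modinv p j \<noteq> j"
    proof
      assume "modinv p j = j"
      then have "j = 1 \<or> j = p - 1"
        using inv[of j] j by (intro prime_square_cong_one[OF assms(1)]) auto
      then show False using j p_gt_2 unfolding half_small_inv_def by auto
    qed
    show "[int j * int (modinv p j) = 1] (mod int p)"
      using inv[of j] j by (metis DiffD1 cong_int_iff of_nat_1 of_nat_mult)
  qed simp
  moreover have "card ?S = card (?S - {1}) + 1" using card.remove[OF finite_half_small_inv one] by simp
  moreover have "(\<Prod>j\<in>?S. int j) = (\<Prod>j\<in>?S - {1}. int j)"
    using prod.remove[OF finite_half_small_inv one, of int] by simp
  ultimately show ?thesis by (simp add: mu_eq_card_half_small_inv)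
qed

definition neg_modinv :: "nat \<Rightarrow> nat \<Rightarrow> nat" where
  "neg_modinv p j = p - modinv p j"

lemma neg_modinv_half_large_inv:
  assumes "prime p" "j \<in> half_large_inv p"
  shows "neg_modinv p j \<in> half_large_inv p"
    and "neg_modinv p (neg_modinv p j) = j"
    and "[int j * int (neg_modinv p j) = -1] (mod int p)"
proof -
  define m where "m = modinv p j"
  have j: "1 \<le> j" "2 * j < p" "p < 2 * m" using assms(2) unfolding half_large_inv_def m_def by auto
  have m: "m \<in> {1..<p}" "[int j * int m = 1] (mod int p)"
    using modinv_spec[OF coprime_less_prime[OF assms(1)]] j prime_gt_1_nat[OF assms(1)]
    unfolding m_def by (auto simp flip: cong_int_iff)
  have n: "int (neg_modinv p j) = int p - int m" using m(1) unfolding neg_modinv_def m_def by simp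
  have "[int j * int p - int j * int m = 0 - 1] (mod int p)"
    using m(2) by (intro cong_diff) (auto simp: cong_0_iff)
  then show pair: "[int j * int (neg_modinv p j) = -1] (mod int p)"
    unfolding n by (simp add: algebra_simps)
  have "int (p - j) * int (neg_modinv p j) = int p * (int p - int j - int m) + int j * int m"
    using j unfolding n by (simp add: algebra_simps of_nat_diff)
  then have "[int (p - j) * int (neg_modinv p j) = int j * int m] (mod int p)"
    by (simp add: cong_iff_dvd_diff)
  then have "[(p - j) * neg_modinv p j = 1] (mod p)"
    using m(2) by (metis cong_int_iff cong_trans of_nat_1 of_nat_mult)
  then have "modinv p (neg_modinv p j) = p - j"
    using j by (intro modinv_eqI) (auto simp: mult.commute)
  then show "neg_modinv p (neg_modinv p j) = j" "neg_modinv p j \<in> half_large_inv p"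
    using j m(1) unfolding neg_modinv_def half_large_inv_def m_def by auto
qed

lemma ip_eqI:
  assumes "prime p" "2 * i < p" "[int i ^ 2 = -1] (mod int p)"
  shows "ip p = i"
  unfolding ip_def using assms cong_square_minus_one_unique by blast

lemma prod_half_large_inv_3_mod_4:
  assumes "prime p" "[p = 3] (mod 4)"
  shows "even (card (half_large_inv p))
    \<and> [(\<Prod>j\<in>half_large_inv p. int j) = (-1) ^ (card (half_large_inv p) div 2)] (mod int p)"
proof (rule prod_cong_involution_without_fixpoints)
  show "finite (half_large_inv p)" by simp
next
  fix j assume j: "j \<in> half_large_inv p"
  show "neg_modinv p j \<in> half_large_inv p" "neg_modinv p (neg_modinv p j) = j"
    and pair: "[int j * int (neg_modinv p j) = -1] (mod int p)"
    using neg_modinv_half_large_inv[OF assms(1) j] by auto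
  show "neg_modinv p j \<noteq> j"
  proof
    assume "neg_modinv p j = j"
    moreover have "p = 2 * (p div 2) + 1" using assms(2) by (simp add: cong_def) presburger
    ultimately have "[p = 1] (mod 4)"
      using pair by (intro cong_square_minus_one_imp_cong_1_mod_4[OF assms(1)]) (auto simp: power2_eq_square)
    then show False using assms(2) by (simp add: cong_def)
  qed
qed

lemma mu_add_card_half_large_inv:
  assumes "p = 2 * h + 1"
  shows "mu p + card (half_large_inv p) = h"
  using card_Un_disjoint[of "half_small_inv p" "half_large_inv p"] half_inv_partition[OF assms]
  by (simp add: mu_eq_card_half_small_inv)

lemma prod_half_large_inv_1_mod_4:
  assumes "prime p" "[p = 1] (mod 4)"
  shows "[(\<Prod>j\<in>half_large_inv p. int j) = int (ip p) * (-1) ^ (card (half_large_inv p) div 2)] (mod int p)"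
proof -
  let ?L = "half_large_inv p"
  define h where "h = p div 2"
  have h: "p = 2 * h + 1" "even h" using assms(2) unfolding cong_def h_def by presburger+
  have odd_card: "odd (card ?L)"
    using mu_add_card_half_large_inv[OF h(1)] prod_half_small_inv[OF assms(1) h(1)] h(2) by auto
  have involution: "neg_modinv p j \<in> ?L" "neg_modinv p (neg_modinv p j) = j"
    and pair: "[int j * int (neg_modinv p j) = -1] (mod int p)" if "j \<in> ?L" for j
    using neg_modinv_half_large_inv[OF assms(1) that] by auto
  have fixpoint_eq_ip: "ip p = j" if "j \<in> ?L" "neg_modinv p j = j" for j
    using that pair[of j] by (intro ip_eqI[OF assms(1)]) (auto simp: half_large_inv_def power2_eq_square)
  have "\<exists>x\<in>?L. neg_modinv p x = x" \<comment> \<open>by parity: \<open>\<mu>\<close> is odd and \<open>h\<close> even\<close>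
  proof (rule ccontr)
    assume "\<not> (\<exists>x\<in>?L. neg_modinv p x = x)"
    then have "even (card ?L) \<and> [(\<Prod>j\<in>?L. int j) = (-1) ^ (card ?L div 2)] (mod int p)"
      using involution pair by (intro prod_cong_involution_without_fixpoints[where s = "neg_modinv p"]) auto
    then show False using odd_card by simp
  qed
  then obtain x where x: "x \<in> ?L" "neg_modinv p x = x" by blast
  have ip: "ip p = x" using fixpoint_eq_ip[OF x] .
  have rest: "even (card (?L - {x}))
    \<and> [(\<Prod>j\<in>?L - {x}. int j) = (-1) ^ (card (?L - {x}) div 2)] (mod int p)"
  proof (rule prod_cong_involution_without_fixpoints[where s = "neg_modinv p"])
    fix j assume j: "j \<in> ?L - {x}"
    then have "j \<in> ?L" "j \<noteq> x" by auto
    then have "neg_modinv p j \<noteq> x" using involution(2) x(2) by metis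
    then show "neg_modinv p j \<in> ?L - {x}" "neg_modinv p (neg_modinv p j) = j"
      using involution \<open>j \<in> ?L\<close> by auto
    show "neg_modinv p j \<noteq> j" using fixpoint_eq_ip ip j by auto
    show "[int j * int (neg_modinv p j) = -1] (mod int p)" using pair j by simp
  qed simp
  have "card ?L = Suc (card (?L - {x}))" using card.remove[OF _ x(1)] by simp
  then have "card ?L div 2 = card (?L - {x}) div 2" using rest by auto
  moreover have "(\<Prod>j\<in>?L. int j) = int x * (\<Prod>j\<in>?L - {x}. int j)" using prod.remove[OF _ x(1)] by simp
  ultimately show ?thesis using ip rest by (simp add: cong_scalar_left)
qed

lemma dfact_cong_prod_half_large_inv:
  assumes "prime p" "p = 2 * h + 1"
  shows "[int (dfact (p - 1)) = (-1) ^ (h - h div 2) * (\<Prod>j\<in>half_large_inv p. int j)] (mod int p)"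
proof -
  have "int (dfact (p - 1)) = 2 ^ h * (\<Prod>j\<in>{1..h}. int j)"
    using assms(2) by (simp add: dfact_double of_nat_fact fact_prod)
  also have "\<dots> = 2 ^ h * (\<Prod>j\<in>half_small_inv p. int j) * (\<Prod>j\<in>half_large_inv p. int j)"
    using prod.union_disjoint[of "half_small_inv p" "half_large_inv p" int] half_inv_partition[OF assms(2)]
    by simp
  also have "[\<dots> = (-1) ^ (h - h div 2) * 1 * (\<Prod>j\<in>half_large_inv p. int j)] (mod int p)"
    using two_power_half_cong[OF assms] prod_half_small_inv[OF assms] by (intro cong_mult cong_refl) auto
  finally show ?thesis by simp
qed

theorem theorem8:
  fixes p :: nat
  assumes "prime p" and "odd p"
  shows "([p = 3] (mod 4) \<longrightarrow>
           [int (dfact (p - 1)) = (-1) ^ ((mu p + 1) div 2)] (mod int p))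
       \<and> ([p = 1] (mod 4) \<longrightarrow>
           [int (dfact (p - 1)) = (-1) ^ ((mu p + 1) div 2) * int (ip p)] (mod int p))"
proof -
  define h where "h = p div 2"
  let ?L = "half_large_inv p"
  have p: "p = 2 * h + 1" using assms(2) unfolding h_def by simp
  note dfact = dfact_cong_prod_half_large_inv[OF assms(1) p]
  obtain a where a: "mu p = 2 * a + 1"
    using prod_half_small_inv[OF assms(1) p] by (auto elim: oddE)
  have card: "2 * a + 1 + card ?L = h" using mu_add_card_half_large_inv[OF p] a by simp
  have "[int (dfact (p - 1)) = (-1) ^ ((mu p + 1) div 2)] (mod int p)" if "[p = 3] (mod 4)"
  proof -
    note L = prod_half_large_inv_3_mod_4[OF assms(1) that]
    then obtain b where b: "card ?L = 2 * b" by (auto elim: evenE)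
    have "h = 2 * (a + b) + 1" using card b by simp
    then have "(-1::int) ^ (h - h div 2) * (-1) ^ (card ?L div 2) = (-1) ^ ((mu p + 1) div 2)"
      unfolding a b by (intro minus_one_power_mult_eq) auto
    then show ?thesis using cong_trans[OF dfact cong_scalar_left[OF conjunct2[OF L]]] by simp
  qed
  moreover have "[int (dfact (p - 1)) = (-1) ^ ((mu p + 1) div 2) * int (ip p)] (mod int p)"
    if "[p = 1] (mod 4)"
  proof -
    note L = prod_half_large_inv_1_mod_4[OF assms(1) that]
    have "even h" using that p unfolding cong_def by presburger
    then have "odd (card ?L)" using card by (auto simp flip: card)
    then obtain b where b: "card ?L = 2 * b + 1" by (rule oddE)
    have "h = 2 * (a + b + 1)" using card b by simp
    then have "(-1::int) ^ (h - h div 2) * (-1) ^ (card ?L div 2) = (-1) ^ ((mu p + 1) div 2)"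
      unfolding a b by (intro minus_one_power_mult_eq) auto
    then show ?thesis using cong_trans[OF dfact cong_scalar_left[OF L]] by (simp add: ac_simps)
  qed
  ultimately show ?thesis by blast
qed

end
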